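(* Let $N\ge1$, $R>0$, $m>1$ with $N>m$, $p>1$, $\gamma\in(0,m-1)$, $\alpha,\beta\in\mathbb R$ with $N+\alpha-m>0$ and $\beta-\alpha+1>0$. Let $a:[0,\infty)\to(0,\infty)$ be of class $C^1$ with $c_1\le a\le c_2$ for constants $0<c_1\le c_2$, and let $g:[0,\infty)\to[0,\infty)$ be of class $C^1$ and nondecreasing. Let $v\in C^1[0,R]$ be the radial profile of a positive radial solution of $$-\mathrm{div}\Big(\frac{|x|^\alpha|\nabla u|^{m-2}\nabla u}{(a(|x|)+g(u))^\gamma}\Big)=|x|^\beta u^p \ \text{in } B_R\setminus\{0\},\qquad u=0 \text{ on }\partial B_R,$$ and let $\sigma$ be a constant with $-(N+\alpha-m)<\sigma\le m-1$. Then, writing $D(r)=a(r)+g(v(r))$, $$\Big(\sigma-m+2-\frac{N+\alpha-m+1+\sigma}{m}+\frac{N+\beta+1+\sigma-m}{p+1}\Big)\int_0^R\frac{r^{N+\alpha-m+\sigma}|v'(r)|^m}{D(r)^\gamma}dr$$ $$=\frac{m-1}{m}\frac{R^{N+\alpha-m+1+\sigma}|v'(R)|^m}{(a(R)+g(0))^\gamma}-\frac{\gamma}{m}\int_0^R\frac{r^{N+\alpha-m+1+\sigma}|v'(r)|^m a'(r)}{D(r)^{\gamma+1}}dr-\frac{\gamma}{m}\int_0^R\frac{r^{N+\alpha-m+1+\sigma}|v'(r)|^m v'(r)g'(v(r))}{D(r)^{\gamma+1}}dr$$ $$-\frac{N+\beta+1+\sigma-m}{p+1}(\sigma-m+1)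\int_0^R\frac{r^{N+\alpha+\sigma-m-1}|v'(r)|^{m-2}v'(r)v(r)}{D(r)^\gamma}dr.$$
   Context: $B_R$ is the open ball of radius $R$ centered at the origin in $\mathbb R^N$. A positive radial solution is $u(x)=v(|x|)$ with $v>0$ on $[0,R)$, $v\in C^1[0,R)\cap C[0,R]$, $r\mapsto r^{N+\alpha-1}|v'(r)|^{m-2}v'(r)(a(r)+g(v(r)))^{-\gamma}\in C^1(0,R)$, and $$-\Big(\frac{r^{N+\alpha-1}|v'(r)|^{m-2}v'(r)}{(a(r)+g(v(r)))^\gamma}\Big)'=r^{N+\beta-1}v^p(r),\ 0<r<R,\qquad v'(0)=0,\ v(R)=0.$$ *)

theory Defs
  imports "HOL-Analysis.Analysis"
begin

text \<open>Radial profile \<open>v\<close> (with derivative \<open>v'\<close> on \<open>[0,R]\<close>, one-sided at the endpoints)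
of a positive radial solution on the ball of radius \<open>R\<close> in dimension \<open>N\<close>, in the sense
of the paper: \<open>v > 0\<close> on \<open>[0,R)\<close>, the flux
\<open>r \<mapsto> r^(N+\<alpha>-1) |v'|^(m-2) v' / (a r + g (v r))^\<gamma>\<close> is \<open>C^1\<close> on \<open>(0,R)\<close> and
satisfies \<open>-(flux)' = r^(N+\<beta>-1) v^p\<close> there, \<open>v'(0) = 0\<close>, \<open>v(R) = 0\<close>.
Here \<open>v\<close> is assumed \<open>C^1\<close> on the closed interval \<open>[0,R]\<close>.\<close>

definition radial_flux ::
  "nat \<Rightarrow> real \<Rightarrow> real \<Rightarrow> real \<Rightarrow> (real \<Rightarrow> real) \<Rightarrow> (real \<Rightarrow> real)
   \<Rightarrow> (real \<Rightarrow> real) \<Rightarrow> (real \<Rightarrow> real) \<Rightarrow> real \<Rightarrow> real" where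
  "radial_flux N \<alpha> m \<gamma> a g v v' r =
     r powr (real N + \<alpha> - 1) * (\<bar>v' r\<bar> powr (m - 2) * v' r)
       / (a r + g (v r)) powr \<gamma>"

definition positive_radial_solution_C1 ::
  "nat \<Rightarrow> real \<Rightarrow> real \<Rightarrow> real \<Rightarrow> real \<Rightarrow> real \<Rightarrow> (real \<Rightarrow> real) \<Rightarrow> (real \<Rightarrow> real)
   \<Rightarrow> real \<Rightarrow> (real \<Rightarrow> real) \<Rightarrow> (real \<Rightarrow> real) \<Rightarrow> bool" where
  "positive_radial_solution_C1 N \<alpha> \<beta> m \<gamma> p a g R v v' \<longleftrightarrow>
     (\<forall>r\<in>{0..R}. (v has_real_derivative v' r) (at r within {0..R})) \<and>
     continuous_on {0..R} v' \<and>
     (\<forall>r\<in>{0..<R}. v r > 0) \<and>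
     (\<exists>F'. continuous_on {0<..<R} F' \<and>
        (\<forall>r\<in>{0<..<R}.
           (radial_flux N \<alpha> m \<gamma> a g v v' has_real_derivative F' r) (at r) \<and>
           - F' r = r powr (real N + \<beta> - 1) * v r powr p)) \<and>
     v' 0 = 0 \<and> v R = 0"

end

theory Submission
  imports Defs
begin

(* The identity is the fundamental theorem of calculus on [0, R] for the Pohozaev function
     W r = (m - 1)/m r^(N+\<alpha>-m+1+\<sigma>) |v'|^m / D^\<gamma> + r^(N+\<beta>+1+\<sigma>-m) v^(p+1) / (p + 1)
           + (N+\<beta>+1+\<sigma>-m)/(p + 1) r^(N+\<alpha>-m+\<sigma>) |v'|^(m-2) v' v / D^\<gamma>,
   which vanishes at 0 and reduces to the boundary term at R because v R = 0.  Since v' is only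
   continuous, W is differentiated through the flux F = r^k |v'|^(m-2) v' / D^\<gamma>, k = N+\<alpha>-1,
   which is C^1 by the equation: with q = m/(m - 1) one has |v'|^m / D^\<gamma> = r^(-kq) |F|^q D^(\<gamma>/(m-1)),
   and the last term of W is F r^(\<sigma>-m+1) v.  The integrand of the last integral, which may be
   singular at 0, is integrable because W' and all its other terms are. *)

lemma has_real_derivative_abs_powr:
  fixes q t :: real
  assumes "q > 1"
  shows "((\<lambda>t. \<bar>t\<bar> powr q) has_real_derivative q * sgn t * \<bar>t\<bar> powr (q - 1)) (at t)"
proof (cases "t = 0")
  case True
  have "((\<lambda>y. \<bar>y\<bar> powr (q - 1)) \<longlongrightarrow> \<bar>0\<bar> powr (q - 1)) (at (0::real))"
    using assms by (intro tendsto_intros) auto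
  then have lim: "((\<lambda>y. \<bar>y\<bar> powr (q - 1)) \<longlongrightarrow> 0) (at (0::real))"
    by simp
  have "((\<lambda>y. norm ((\<bar>y\<bar> powr q - \<bar>0\<bar> powr q) / (y - 0))) \<longlongrightarrow> 0) (at (0::real))"
    by (rule Lim_transform_eventually[OF lim]) (auto simp: eventually_at_filter powr_diff)
  then have "((\<lambda>y. (\<bar>y\<bar> powr q - \<bar>0\<bar> powr q) / (y - 0)) \<longlongrightarrow> 0) (at (0::real))"
    by (simp only: tendsto_norm_zero_iff)
  with True show ?thesis by (simp add: has_field_derivative_iff)
next
  case False
  then consider "t > 0" | "t < 0" by linarith
  then show ?thesis
  proof cases
    case 1
    have "((\<lambda>t. t powr q) has_real_derivative q * sgn t * \<bar>t\<bar> powr (q - 1)) (at t)"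
      using DERIV_fun_powr[OF DERIV_ident 1, of q] 1 by simp
    then show ?thesis
      by (rule has_field_derivative_transform_within_open[where S="{0<..}"]) (use 1 in auto)
  next
    case 2
    have "((\<lambda>t. (-t) powr q) has_real_derivative q * sgn t * \<bar>t\<bar> powr (q - 1)) (at t)"
      using DERIV_fun_powr[OF DERIV_minus[OF DERIV_ident], of t q] 2 by simp
    then show ?thesis
      by (rule has_field_derivative_transform_within_open[where S="{..<0}"]) (use 2 in auto)
  qed
qed

lemma abs_powr_mult_abs:
  fixes y s :: real
  shows "\<bar>y\<bar> powr s * \<bar>y\<bar> = \<bar>y\<bar> powr (s + 1)"
  by (simp add: powr_add)

lemma signed_powr_mult_self: "\<bar>y\<bar> powr (m - 2) * y * y = \<bar>y\<bar> powr m" for y m :: real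
proof -
  have "\<bar>y\<bar> powr (m - 2) * y * y = \<bar>y\<bar> powr (m - 2) * \<bar>y\<bar> * \<bar>y\<bar>"
    by (simp add: abs_mult_self_eq mult.assoc)
  then show ?thesis by (simp add: abs_powr_mult_abs)
qed

lemma signed_powr_eq_max_diff:
  "\<bar>y\<bar> powr (m - 2) * y = max y 0 powr (m - 1) - max (- y) 0 powr (m - 1)" for y m :: real
proof (cases y "0::real" rule: linorder_cases)
  case less
  then show ?thesis
    using abs_powr_mult_abs[of y "m - 2"] by (simp add: max_def)
next
  case greater
  then show ?thesis
    using abs_powr_mult_abs[of y "m - 2"] by (simp add: max_def)
qed simp

lemma continuous_on_signed_powr:
  fixes m :: real
  assumes "m > 1"
  shows "continuous_on A (\<lambda>y. \<bar>y\<bar> powr (m - 2) * y)"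
  unfolding signed_powr_eq_max_diff using assms
  by (intro continuous_on_powr' continuous_intros) auto

lemma abs_weighted_signed_powr_powr:
  fixes x d y k m \<gamma> s :: real
  assumes "x > 0" "d > 0"
  shows "\<bar>x powr k * (\<bar>y\<bar> powr (m - 2) * y) / d powr \<gamma>\<bar> powr s
       = x powr (k * s) * \<bar>y\<bar> powr ((m - 1) * s) / d powr (\<gamma> * s)"
proof -
  have "\<bar>x powr k * (\<bar>y\<bar> powr (m - 2) * y) / d powr \<gamma>\<bar> = x powr k * \<bar>y\<bar> powr (m - 1) / d powr \<gamma>"
    using abs_powr_mult_abs[of y "m - 2"] by (simp add: abs_mult)
  then show ?thesis
    using assms by (simp add: powr_divide powr_mult powr_powr)
qed

lemma weighted_abs_powr_eq_flux_powr:
  fixes x d y k m \<gamma> s :: real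
  assumes "m > 1" "x > 0" "d > 0"
  defines "F \<equiv> x powr k * (\<bar>y\<bar> powr (m - 2) * y) / d powr \<gamma>"
  shows "x powr s * \<bar>y\<bar> powr m / d powr \<gamma>
       = x powr (s - k * (m / (m - 1))) * \<bar>F\<bar> powr (m / (m - 1)) * d powr (\<gamma> / (m - 1))"
proof -
  have q: "(m - 1) * (m / (m - 1)) = m" "\<gamma> * (m / (m - 1)) = \<gamma> + \<gamma> / (m - 1)"
    using assms(1) by (auto simp: field_simps)
  have "\<bar>F\<bar> powr (m / (m - 1)) = x powr (k * (m / (m - 1))) * \<bar>y\<bar> powr m / (d powr \<gamma> * d powr (\<gamma> / (m - 1)))"
    unfolding F_def abs_weighted_signed_powr_powr[OF assms(2,3)] q powr_add ..
  then show ?thesis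
    using assms(2,3) by (simp add: powr_diff)
qed

lemma sgn_flux_mult_powr:
  fixes x d y k m \<gamma> :: real
  assumes "m > 1" "x > 0" "d > 0"
  defines "F \<equiv> x powr k * (\<bar>y\<bar> powr (m - 2) * y) / d powr \<gamma>"
  shows "sgn F * \<bar>F\<bar> powr (m / (m - 1) - 1) = x powr (k * (m / (m - 1) - 1)) * y / d powr (\<gamma> / (m - 1))"
proof -
  have q: "(m - 1) * (m / (m - 1) - 1) = 1" "\<gamma> * (m / (m - 1) - 1) = \<gamma> / (m - 1)"
    using assms(1) by (auto simp: field_simps)
  have "\<bar>F\<bar> powr (m / (m - 1) - 1) = x powr (k * (m / (m - 1) - 1)) * \<bar>y\<bar> / d powr (\<gamma> / (m - 1))"
    unfolding F_def abs_weighted_signed_powr_powr[OF assms(2,3)] q by simp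
  moreover have "sgn F = sgn y"
    using assms(2,3) by (cases "y = 0") (simp_all add: F_def sgn_mult)
  ultimately show ?thesis
    by (simp add: sgn_mult_abs mult.left_commute)
qed

lemma has_real_derivative_weighted_abs_powr:
  fixes m k s \<gamma> F' D' r :: real and w D F :: "real \<Rightarrow> real"
  assumes m: "m > 1" and S: "open S" "r \<in> S"
    and pos: "\<And>x. x \<in> S \<Longrightarrow> x > 0 \<and> D x > 0"
    and F_eq: "\<And>x. x \<in> S \<Longrightarrow> F x = x powr k * (\<bar>w x\<bar> powr (m - 2) * w x) / D x powr \<gamma>"
    and dF: "(F has_real_derivative F') (at r)" and dD: "(D has_real_derivative D') (at r)"
  shows "((\<lambda>x. x powr s * \<bar>w x\<bar> powr m / D x powr \<gamma>) has_real_derivative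
      (s - k * m / (m - 1)) * r powr (s - 1) * \<bar>w r\<bar> powr m / D r powr \<gamma>
      + m / (m - 1) * r powr (s - k) * w r * F'
      + \<gamma> / (m - 1) * r powr s * \<bar>w r\<bar> powr m * D' / D r powr (\<gamma> + 1)) (at r)"
proof -
  define q where "q = m / (m - 1)"
  define B where "B = \<gamma> / (m - 1)"
  have q: "q > 1" using m by (simp add: q_def field_simps)
  have r: "r > 0" "D r > 0" using pos S(2) by auto
  have G_eq: "x powr e * \<bar>w x\<bar> powr m / D x powr \<gamma> = x powr (e - k * q) * \<bar>F x\<bar> powr q * D x powr B"
    if "x \<in> S" for x e
    using pos[OF that] unfolding F_eq[OF that] q_def B_def
    by (intro weighted_abs_powr_eq_flux_powr[OF m]) auto
  have p1: "r powr (s - k * q - 1) * \<bar>F r\<bar> powr q * D r powr B = r powr (s - 1) * \<bar>w r\<bar> powr m / D r powr \<gamma>"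
    using G_eq[OF S(2), of "s - 1"] by (simp add: algebra_simps)
  have "sgn (F r) * \<bar>F r\<bar> powr (q - 1) = r powr (k * (q - 1)) * w r / D r powr B"
    unfolding F_eq[OF S(2)] q_def B_def by (rule sgn_flux_mult_powr[OF m r])
  moreover have "r powr (s - k * q) * r powr (k * (q - 1)) = r powr (s - k)"
    by (simp add: algebra_simps flip: powr_add)
  ultimately have p2: "r powr (s - k * q) * D r powr B * (sgn (F r) * \<bar>F r\<bar> powr (q - 1)) = r powr (s - k) * w r"
    using r by simp
  have "D r powr (B - 1) * r powr (s - k * q) * \<bar>F r\<bar> powr q
      = r powr (s - k * q) * \<bar>F r\<bar> powr q * D r powr B / D r"
    using r by (simp add: powr_diff mult_ac)
  also have "\<dots> = r powr s * \<bar>w r\<bar> powr m / D r powr \<gamma> / D r"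
    unfolding G_eq[OF S(2), of s] ..
  also have "\<dots> = r powr s * \<bar>w r\<bar> powr m / D r powr (\<gamma> + 1)"
    using r by (simp add: powr_add)
  finally have p3: "D r powr (B - 1) * r powr (s - k * q) * \<bar>F r\<bar> powr q
      = r powr s * \<bar>w r\<bar> powr m / D r powr (\<gamma> + 1)" .
  have "((\<lambda>x. x powr (s - k * q) * \<bar>F x\<bar> powr q * D x powr B) has_real_derivative
      (s - k * q) * (r powr (s - k * q - 1) * \<bar>F r\<bar> powr q * D r powr B)
      + q * F' * (r powr (s - k * q) * D r powr B * (sgn (F r) * \<bar>F r\<bar> powr (q - 1)))
      + B * D' * (D r powr (B - 1) * r powr (s - k * q) * \<bar>F r\<bar> powr q)) (at r)"
    by (rule DERIV_cong[OF DERIV_mult[OF DERIV_mult[OF DERIV_fun_powr[OF DERIV_ident r(1)]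
          DERIV_chain2[OF has_real_derivative_abs_powr[OF q] dF]] DERIV_fun_powr[OF dD r(2)]]])
      (simp add: algebra_simps)
  then have "((\<lambda>x. x powr (s - k * q) * \<bar>F x\<bar> powr q * D x powr B) has_real_derivative
      (s - k * m / (m - 1)) * r powr (s - 1) * \<bar>w r\<bar> powr m / D r powr \<gamma>
      + m / (m - 1) * r powr (s - k) * w r * F'
      + \<gamma> / (m - 1) * r powr s * \<bar>w r\<bar> powr m * D' / D r powr (\<gamma> + 1)) (at r)"
    unfolding p1 p2 p3 by (rule DERIV_cong) (simp add: q_def B_def mult_ac)
  then show ?thesis
    using S G_eq[of _ s] by (auto intro: has_field_derivative_transform_within_open)
qed

lemma integral_add_scaled:
  fixes f g :: "'a::euclidean_space \<Rightarrow> real"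
  assumes "(\<lambda>x. f x + c * g x) integrable_on S" and "f integrable_on S"
  shows "integral S (\<lambda>x. f x + c * g x) = integral S f + c * integral S g"
proof -
  have "(\<lambda>x. c * g x) integrable_on S"
    using integrable_diff[OF assms] by simp
  with assms(2) show ?thesis by (simp add: integral_add)
qed

locale radial_pohozaev =
  fixes N :: nat and \<alpha> \<beta> m \<gamma> p \<sigma> R :: real and a a' g g' v v' :: "real \<Rightarrow> real"
  assumes R_pos: "R > 0" and m_gt_1: "m > 1" and p_gt_minus_1: "p > -1"
    and weight_exponent_pos: "real N + \<alpha> - m + \<sigma> > 0" and beta_alpha_gap_pos: "\<beta> - \<alpha> + 1 > 0"
    and a_deriv: "\<And>r. r \<ge> 0 \<Longrightarrow> (a has_real_derivative a' r) (at r within {0..})"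
    and a'_cont: "continuous_on {0..} a'"
    and a_pos: "\<And>r. r \<ge> 0 \<Longrightarrow> a r > 0"
    and g_deriv: "\<And>s. s \<ge> 0 \<Longrightarrow> (g has_real_derivative g' s) (at s within {0..})"
    and g'_cont: "continuous_on {0..} g'"
    and g_nonneg: "\<And>s. s \<ge> 0 \<Longrightarrow> g s \<ge> 0"
    and solution: "positive_radial_solution_C1 N \<alpha> \<beta> m \<gamma> p a g R v v'"
begin

lemma v_deriv_within: "r \<in> {0..R} \<Longrightarrow> (v has_real_derivative v' r) (at r within {0..R})"
  and continuous_on_v': "continuous_on {0..R} v'"
  and v_pos: "r \<in> {0..<R} \<Longrightarrow> v r > 0"
  and v_R: "v R = 0"
  using solution by (auto simp: positive_radial_solution_C1_def)

lemma radial_flux_has_derivative: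
  assumes "r \<in> {0<..<R}"
  shows "(radial_flux N \<alpha> m \<gamma> a g v v' has_real_derivative - (r powr (real N + \<beta> - 1) * v r powr p)) (at r)"
proof -
  obtain F' where "\<forall>r\<in>{0<..<R}. (radial_flux N \<alpha> m \<gamma> a g v v' has_real_derivative F' r) (at r)
      \<and> - F' r = r powr (real N + \<beta> - 1) * v r powr p"
    using solution unfolding positive_radial_solution_C1_def by blast
  with assms show ?thesis by (metis minus_minus)
qed

lemma v_nonneg: "r \<in> {0..R} \<Longrightarrow> v r \<ge> 0"
  using v_pos v_R by (cases "r = R") (auto intro: less_imp_le)

lemma continuous_on_v: "continuous_on {0..R} v"
  using v_deriv_within by (intro DERIV_continuous_on) auto

lemma v_has_derivative: "r \<in> {0<..<R} \<Longrightarrow> (v has_real_derivative v' r) (at r)"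
  using v_deriv_within[of r] at_within_interior[of r "{0..R}"] by auto

definition D :: "real \<Rightarrow> real" where "D r = a r + g (v r)"

lemma D_pos: "r \<in> {0..R} \<Longrightarrow> D r > 0"
  using a_pos[of r] g_nonneg[of "v r"] v_nonneg[of r] by (auto simp: D_def add_pos_nonneg)

lemma continuous_on_D: "continuous_on {0..R} D"
proof -
  have "continuous_on {0..} a"
    using a_deriv by (intro DERIV_continuous_on) auto
  then have "continuous_on {0..R} a"
    by (rule continuous_on_subset) auto
  moreover have "continuous_on {0..} g"
    using g_deriv by (intro DERIV_continuous_on) auto
  then have "continuous_on {0..R} (\<lambda>r. g (v r))"
    using continuous_on_v v_nonneg by (auto intro: continuous_on_compose2)
  ultimately show ?thesis unfolding D_def by (intro continuous_intros)
qed

lemma D_has_derivative: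
  assumes "r \<in> {0<..<R}"
  shows "(D has_real_derivative a' r + g' (v r) * v' r) (at r)"
proof -
  have "(a has_real_derivative a' r) (at r)"
    using a_deriv[of r] assms at_within_interior[of r "{0..}"] by auto
  moreover have "(g has_real_derivative g' (v r)) (at (v r))"
    using g_deriv[of "v r"] v_pos[of r] assms at_within_interior[of "v r" "{0..}"] by auto
  ultimately show ?thesis
    unfolding D_def by (intro DERIV_add DERIV_chain2[where f = g] v_has_derivative assms)
qed

lemma kinetic_term_has_derivative:
  assumes r: "r \<in> {0<..<R}"
  shows "((\<lambda>x. x powr (real N + \<alpha> - m + 1 + \<sigma>) * \<bar>v' x\<bar> powr m / D x powr \<gamma>) has_real_derivative
      (real N + \<alpha> - m + 1 + \<sigma> - (real N + \<alpha> - 1) * m / (m - 1))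
        * (r powr (real N + \<alpha> - m + \<sigma>) * \<bar>v' r\<bar> powr m / D r powr \<gamma>)
      - m / (m - 1) * (r powr (real N + \<beta> + 1 + \<sigma> - m) * v r powr p * v' r)
      + \<gamma> / (m - 1) * (r powr (real N + \<alpha> - m + 1 + \<sigma>) * \<bar>v' r\<bar> powr m * a' r / D r powr (\<gamma> + 1)
        + r powr (real N + \<alpha> - m + 1 + \<sigma>) * \<bar>v' r\<bar> powr m * v' r * g' (v r) / D r powr (\<gamma> + 1)))
    (at r)"
proof -
  have deriv: "((\<lambda>x. x powr (real N + \<alpha> - m + 1 + \<sigma>) * \<bar>v' x\<bar> powr m / D x powr \<gamma>) has_real_derivative
      (real N + \<alpha> - m + 1 + \<sigma> - (real N + \<alpha> - 1) * m / (m - 1))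
        * r powr (real N + \<alpha> - m + 1 + \<sigma> - 1) * \<bar>v' r\<bar> powr m / D r powr \<gamma>
      + m / (m - 1) * r powr (real N + \<alpha> - m + 1 + \<sigma> - (real N + \<alpha> - 1)) * v' r
        * - (r powr (real N + \<beta> - 1) * v r powr p)
      + \<gamma> / (m - 1) * r powr (real N + \<alpha> - m + 1 + \<sigma>) * \<bar>v' r\<bar> powr m
        * (a' r + g' (v r) * v' r) / D r powr (\<gamma> + 1)) (at r)"
    using r D_pos m_gt_1
    by (intro has_real_derivative_weighted_abs_powr[where S = "{0<..<R}" and F = "radial_flux N \<alpha> m \<gamma> a g v v'"]
        radial_flux_has_derivative D_has_derivative) (auto simp: radial_flux_def D_def)
  have exponents: "r powr (real N + \<alpha> - m + 1 + \<sigma> - (real N + \<alpha> - 1)) * r powr (real N + \<beta> - 1)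
      = r powr (real N + \<beta> + 1 + \<sigma> - m)"
    by (simp add: algebra_simps flip: powr_add)
  show ?thesis
    by (intro DERIV_cong[OF deriv]) (simp only: flip: exponents, simp add: divide_inverse algebra_simps)
qed

lemma mixed_term_has_derivative:
  assumes r: "r \<in> {0<..<R}"
  shows "((\<lambda>x. x powr (real N + \<alpha> - m + \<sigma>) * (\<bar>v' x\<bar> powr (m - 2) * v' x) * v x / D x powr \<gamma>)
      has_real_derivative
      - (r powr (real N + \<beta> + \<sigma> - m) * v r powr (p + 1))
      + (\<sigma> - m + 1) * (r powr (real N + \<alpha> + \<sigma> - m - 1) * \<bar>v' r\<bar> powr (m - 2) * v' r * v r / D r powr \<gamma>)
      + r powr (real N + \<alpha> - m + \<sigma>) * \<bar>v' r\<bar> powr m / D r powr \<gamma>) (at r)"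
proof -
  let ?F = "radial_flux N \<alpha> m \<gamma> a g v v'"
  have r0: "r > 0" and vr: "v r > 0" using r v_pos by auto
  have pw: "((\<lambda>x. x powr (\<sigma> - m + 1)) has_real_derivative (\<sigma> - m + 1) * r powr (\<sigma> - m)) (at r)"
    using DERIV_fun_powr[OF DERIV_ident r0, of "\<sigma> - m + 1"] by simp
  have deriv: "((\<lambda>x. ?F x * x powr (\<sigma> - m + 1) * v x) has_real_derivative
      (- (r powr (real N + \<beta> - 1) * v r powr p) * r powr (\<sigma> - m + 1)
        + (\<sigma> - m + 1) * r powr (\<sigma> - m) * ?F r) * v r
      + v' r * (?F r * r powr (\<sigma> - m + 1))) (at r)"
    by (rule DERIV_mult[OF DERIV_mult[OF radial_flux_has_derivative[OF r] pw] v_has_derivative[OF r]])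
  have exponents: "r powr (real N + \<beta> - 1) * r powr (\<sigma> - m + 1) = r powr (real N + \<beta> + \<sigma> - m)"
    "r powr (\<sigma> - m) * r powr (real N + \<alpha> - 1) = r powr (real N + \<alpha> + \<sigma> - m - 1)"
    "r powr (real N + \<alpha> - 1) * r powr (\<sigma> - m + 1) = r powr (real N + \<alpha> - m + \<sigma>)"
    by (simp_all add: algebra_simps flip: powr_add)
  have v_power: "v r powr p * v r = v r powr (p + 1)"
    using vr by (simp add: powr_add)
  have "(- (r powr (real N + \<beta> - 1) * v r powr p) * r powr (\<sigma> - m + 1)
        + (\<sigma> - m + 1) * r powr (\<sigma> - m) * ?F r) * v r
      + v' r * (?F r * r powr (\<sigma> - m + 1))
    = - (r powr (real N + \<beta> + \<sigma> - m) * v r powr (p + 1))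
      + (\<sigma> - m + 1) * (r powr (real N + \<alpha> + \<sigma> - m - 1) * \<bar>v' r\<bar> powr (m - 2) * v' r * v r / D r powr \<gamma>)
      + r powr (real N + \<alpha> - m + \<sigma>) * \<bar>v' r\<bar> powr m / D r powr \<gamma>"
    unfolding radial_flux_def D_def[symmetric]
    by (simp only: flip: exponents v_power signed_powr_mult_self[of "v' r" m],
        simp add: divide_inverse algebra_simps)
  moreover have "?F x * x powr (\<sigma> - m + 1) * v x
      = x powr (real N + \<alpha> - m + \<sigma>) * (\<bar>v' x\<bar> powr (m - 2) * v' x) * v x / D x powr \<gamma>"
    if "x \<in> {0<..<R}" for x
  proof -
    have "x powr (real N + \<alpha> - 1) * x powr (\<sigma> - m + 1) = x powr (real N + \<alpha> - m + \<sigma>)"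
      by (simp add: algebra_simps flip: powr_add)
    then show ?thesis
      unfolding radial_flux_def D_def[symmetric] by (simp add: divide_inverse algebra_simps)
  qed
  ultimately show ?thesis
    using deriv r by (auto intro: has_field_derivative_transform_within_open[where S = "{0<..<R}"])
qed

lemma potential_term_has_derivative:
  assumes r: "r \<in> {0<..<R}"
  shows "((\<lambda>x. x powr (real N + \<beta> + 1 + \<sigma> - m) * v x powr (p + 1) / (p + 1)) has_real_derivative
      (real N + \<beta> + 1 + \<sigma> - m) / (p + 1) * (r powr (real N + \<beta> + \<sigma> - m) * v r powr (p + 1))
      + r powr (real N + \<beta> + 1 + \<sigma> - m) * v r powr p * v' r) (at r)"
proof -
  have r0: "r > 0" and vr: "v r > 0" using r v_pos by auto
  note deriv = DERIV_cdivide[OF DERIV_mult[OF DERIV_fun_powr[OF DERIV_ident r0, of "real N + \<beta> + 1 + \<sigma> - m"]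
      DERIV_fun_powr[OF v_has_derivative[OF r] vr, of "p + 1"]], of "p + 1"]
  show ?thesis
    by (rule DERIV_cong[OF deriv]) (use p_gt_minus_1 in \<open>simp add: field_simps\<close>)
qed

definition pohozaev_function :: "real \<Rightarrow> real" where
  "pohozaev_function r =
     (m - 1) / m * (r powr (real N + \<alpha> - m + 1 + \<sigma>) * \<bar>v' r\<bar> powr m / D r powr \<gamma>)
     + r powr (real N + \<beta> + 1 + \<sigma> - m) * v r powr (p + 1) / (p + 1)
     + (real N + \<beta> + 1 + \<sigma> - m) / (p + 1)
       * (r powr (real N + \<alpha> - m + \<sigma>) * (\<bar>v' r\<bar> powr (m - 2) * v' r) * v r / D r powr \<gamma>)"

lemma pohozaev_function_has_derivative:
  assumes r: "r \<in> {0<..<R}"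
  shows "(pohozaev_function has_real_derivative
      (\<sigma> - m + 2 - (real N + \<alpha> - m + 1 + \<sigma>) / m + (real N + \<beta> + 1 + \<sigma> - m) / (p + 1))
        * (r powr (real N + \<alpha> - m + \<sigma>) * \<bar>v' r\<bar> powr m / D r powr \<gamma>)
      + \<gamma> / m * (r powr (real N + \<alpha> - m + 1 + \<sigma>) * \<bar>v' r\<bar> powr m * a' r / D r powr (\<gamma> + 1))
      + \<gamma> / m * (r powr (real N + \<alpha> - m + 1 + \<sigma>) * \<bar>v' r\<bar> powr m * v' r * g' (v r) / D r powr (\<gamma> + 1))
      + (real N + \<beta> + 1 + \<sigma> - m) / (p + 1) * (\<sigma> - m + 1)
        * (r powr (real N + \<alpha> + \<sigma> - m - 1) * \<bar>v' r\<bar> powr (m - 2) * v' r * v r / D r powr \<gamma>))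
    (at r)"
proof -
  define s where "s = real N + \<alpha> - m + 1 + \<sigma>"
  define Q where "Q = (real N + \<beta> + 1 + \<sigma> - m) / (p + 1)"
  have coefficients:
    "(m - 1) / m * ((s - (real N + \<alpha> - 1) * m / (m - 1)) * T - m / (m - 1) * X + \<gamma> / (m - 1) * (Sa + Sg))
      + (Q * P + X) + Q * (- P + (\<sigma> - m + 1) * U + T)
    = (\<sigma> - m + 2 - s / m + Q) * T + \<gamma> / m * Sa + \<gamma> / m * Sg + Q * (\<sigma> - m + 1) * U"
    for T X Sa Sg P U :: real
  proof -
    have "m \<noteq> 0" "m - 1 \<noteq> 0" using m_gt_1 by auto
    then show ?thesis by (simp add: s_def divide_simps) (simp add: algebra_simps)
  qed
  show ?thesis
    unfolding pohozaev_function_def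
    by (rule DERIV_cong[OF DERIV_add[OF DERIV_add[OF DERIV_cmult[OF kinetic_term_has_derivative[OF r]]
          potential_term_has_derivative[OF r]] DERIV_cmult[OF mixed_term_has_derivative[OF r]]]])
      (use coefficients in \<open>simp only: s_def Q_def\<close>)
qed

lemma continuous_on_powers:
  shows continuous_on_powr_id: "e > 0 \<Longrightarrow> continuous_on {0..R} (\<lambda>r. r powr e)"
    and continuous_on_abs_v'_powr: "e > 0 \<Longrightarrow> continuous_on {0..R} (\<lambda>r. \<bar>v' r\<bar> powr e)"
    and continuous_on_v_powr: "e > 0 \<Longrightarrow> continuous_on {0..R} (\<lambda>r. v r powr e)"
    and continuous_on_D_powr: "continuous_on {0..R} (\<lambda>r. D r powr e)"
  using v_nonneg D_pos
  by (intro continuous_on_powr' continuous_intros continuous_on_v continuous_on_v' continuous_on_D;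
      force)+

lemma continuous_on_pohozaev_function: "continuous_on {0..R} pohozaev_function"
proof -
  have signed: "continuous_on {0..R} (\<lambda>r. \<bar>v' r\<bar> powr (m - 2) * v' r)"
    using continuous_on_compose2[OF continuous_on_signed_powr[OF m_gt_1] continuous_on_v'] by auto
  have "D r \<noteq> 0" if "r \<in> {0..R}" for r
    using D_pos[OF that] by simp
  then show ?thesis
    unfolding pohozaev_function_def
    using weight_exponent_pos beta_alpha_gap_pos p_gt_minus_1 m_gt_1
    by (intro signed continuous_on_add continuous_on_mult continuous_on_divide continuous_on_const
        continuous_on_powr_id continuous_on_abs_v'_powr continuous_on_v_powr continuous_on_D_powr
        continuous_on_v) auto
qed

lemma pohozaev_identity:
  "(\<sigma> - m + 2 - (real N + \<alpha> - m + 1 + \<sigma>) / m + (real N + \<beta> + 1 + \<sigma> - m) / (p + 1))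
     * integral {0..R} (\<lambda>r. r powr (real N + \<alpha> - m + \<sigma>) * \<bar>v' r\<bar> powr m / D r powr \<gamma>)
   = (m - 1) / m * (R powr (real N + \<alpha> - m + 1 + \<sigma>) * \<bar>v' R\<bar> powr m / (a R + g 0) powr \<gamma>)
     - \<gamma> / m * integral {0..R} (\<lambda>r. r powr (real N + \<alpha> - m + 1 + \<sigma>) * \<bar>v' r\<bar> powr m
                                       * a' r / D r powr (\<gamma> + 1))
     - \<gamma> / m * integral {0..R} (\<lambda>r. r powr (real N + \<alpha> - m + 1 + \<sigma>) * \<bar>v' r\<bar> powr m
                                       * v' r * g' (v r) / D r powr (\<gamma> + 1))
     - (real N + \<beta> + 1 + \<sigma> - m) / (p + 1) * (\<sigma> - m + 1)
       * integral {0..R} (\<lambda>r. r powr (real N + \<alpha> + \<sigma> - m - 1) * \<bar>v' r\<bar> powr (m - 2)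
                                * v' r * v r / D r powr \<gamma>)"
  (is "?C * integral _ ?T = ?boundary - ?Ca * integral _ ?Sa - ?Cg * integral _ ?Sg - ?Cu * integral _ ?U")
proof -
  have ftc: "((\<lambda>r. ?C * ?T r + ?Ca * ?Sa r + ?Cg * ?Sg r + ?Cu * ?U r) has_integral
      pohozaev_function R - pohozaev_function 0) {0..R}"
    using pohozaev_function_has_derivative continuous_on_pohozaev_function R_pos
    by (intro fundamental_theorem_of_calculus_interior)
      (auto simp: has_real_derivative_iff_has_vector_derivative[symmetric])
  have "continuous_on {0..R} (\<lambda>r. g' (v r))"
    by (rule continuous_on_compose2[OF g'_cont continuous_on_v]) (use v_nonneg in auto)
  moreover have "continuous_on {0..R} a'"
    using a'_cont by (rule continuous_on_subset) auto
  moreover have "D r powr e \<noteq> 0" if "r \<in> {0..R}" for r e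
    using D_pos[OF that] by simp
  ultimately have integrable: "?T integrable_on {0..R}" "?Sa integrable_on {0..R}" "?Sg integrable_on {0..R}"
    using weight_exponent_pos m_gt_1
    by (auto intro!: integrable_continuous_interval continuous_on_mult continuous_on_divide
        continuous_on_powr_id continuous_on_abs_v'_powr continuous_on_D_powr continuous_on_v')
  then have "integral {0..R} (\<lambda>r. ?C * ?T r + ?Ca * ?Sa r + ?Cg * ?Sg r)
      = ?C * integral {0..R} ?T + ?Ca * integral {0..R} ?Sa + ?Cg * integral {0..R} ?Sg"
    by (simp only: integral_add integrable_add integrable_on_mult_right integral_mult_right)
  moreover have "integral {0..R} (\<lambda>r. ?C * ?T r + ?Ca * ?Sa r + ?Cg * ?Sg r + ?Cu * ?U r)
      = integral {0..R} (\<lambda>r. ?C * ?T r + ?Ca * ?Sa r + ?Cg * ?Sg r) + ?Cu * integral {0..R} ?U"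
    by (rule integral_add_scaled[OF has_integral_integrable[OF ftc]])
      (intro integrable_add integrable_on_mult_right integrable)
  moreover have "pohozaev_function 0 = 0"
    by (simp add: pohozaev_function_def)
  moreover have "pohozaev_function R = ?boundary"
    by (simp add: pohozaev_function_def v_R D_def)
  ultimately show ?thesis
    using ftc by (simp add: integral_unique)
qed

end

theorem proposition8p1:
  fixes N :: nat and R m p \<gamma> \<alpha> \<beta> c1 c2 \<sigma> :: real
    and a a' g g' v v' :: "real \<Rightarrow> real"
  assumes "N \<ge> 1" and "R > 0" and "m > 1" and "real N > m" and "p > 1"
    and "0 < \<gamma>" and "\<gamma> < m - 1"
    and "real N + \<alpha> - m > 0" and "\<beta> - \<alpha> + 1 > 0"
    and "\<forall>r\<in>{0..}. (a has_real_derivative a' r) (at r within {0..})"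
    and "continuous_on {0..} a'"
    and "0 < c1" and "c1 \<le> c2" and "\<forall>r\<in>{0..}. c1 \<le> a r \<and> a r \<le> c2"
    and "\<forall>s\<in>{0..}. (g has_real_derivative g' s) (at s within {0..})"
    and "continuous_on {0..} g'"
    and "\<forall>s\<in>{0..}. g s \<ge> 0"
    and "mono_on {0..} g"
    and "positive_radial_solution_C1 N \<alpha> \<beta> m \<gamma> p a g R v v'"
    and "-(real N + \<alpha> - m) < \<sigma>" and "\<sigma> \<le> m - 1"
  shows "(let D = (\<lambda>r. a r + g (v r)) in
     (\<sigma> - m + 2 - (real N + \<alpha> - m + 1 + \<sigma>) / m + (real N + \<beta> + 1 + \<sigma> - m) / (p + 1))
       * integral {0..R} (\<lambda>r. r powr (real N + \<alpha> - m + \<sigma>) * \<bar>v' r\<bar> powr m / D r powr \<gamma>)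
     = (m - 1) / m * (R powr (real N + \<alpha> - m + 1 + \<sigma>) * \<bar>v' R\<bar> powr m
                       / (a R + g 0) powr \<gamma>)
       - \<gamma> / m * integral {0..R} (\<lambda>r. r powr (real N + \<alpha> - m + 1 + \<sigma>) * \<bar>v' r\<bar> powr m
                                        * a' r / D r powr (\<gamma> + 1))
       - \<gamma> / m * integral {0..R} (\<lambda>r. r powr (real N + \<alpha> - m + 1 + \<sigma>) * \<bar>v' r\<bar> powr m
                                        * v' r * g' (v r) / D r powr (\<gamma> + 1))
       - (real N + \<beta> + 1 + \<sigma> - m) / (p + 1) * (\<sigma> - m + 1)
         * integral {0..R} (\<lambda>r. r powr (real N + \<alpha> + \<sigma> - m - 1) * \<bar>v' r\<bar> powr (m - 2)
                                  * v' r * v r / D r powr \<gamma>))"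
proof -
  interpret radial_pohozaev N \<alpha> \<beta> m \<gamma> p \<sigma> R a a' g g' v v'
    using assms by unfold_locales (auto intro: order.strict_trans2)
  show ?thesis
    using pohozaev_identity unfolding Let_def D_def .
qed

end
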